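(* Let $\Phi$ satisfy the Standing Assumption and suppose moreover that the Lévy measure $\nu_\Phi$ is absolutely continuous with respect to Lebesgue measure. Let $X$ be a Banach space, $F:X\to X$ a bounded linear operator, $\xi,f_0\in X$. If the problem $\partial_t^\Phi f(t)=\xi+Ff(t)$ for $t>0$, $f(0)=f_0$, admits a solution $f\in C([0,+\infty),X)$, then this solution is unique among solutions in $C([0,+\infty),X)$.
   Context: Standing Assumption: $\Phi$ is a special Bernstein function (both $\Phi$ and $\lambda/\Phi(\lambda)$ are Bernstein functions) with Lévy–Khintchine representation $\Phi(\lambda)=\int_0^\infty(1-e^{-\lambda x})\nu_\Phi(dx)$ (i.e. $a_\Phi=b_\Phi=0$) and $\nu_\Phi(0,\infty)=\infty$; the potential measure of its subordinator has a non-increasing density $u_\Phi$ with $u_\Phi(t)\le Ct^{\beta-1}$ on $(0,t_0)$ for some $t_0,C>0,\beta\in(0,1)$. $\bar\nu_\Phi(t)=\nu_\Phi((t,\infty))$. Generalized Caputo derivative: $\partial_t^\Phi f(t)=\frac{d}{dt}\int_0^t\bar\nu_\Phi(t-s)(f(s)-f(0))ds$. *)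

theory Defs
  imports "HOL-Probability.Probability"
begin

definition bernstein :: "(real \<Rightarrow> real) \<Rightarrow> bool" where
  "bernstein g \<longleftrightarrow>
     (\<forall>x>0. g x \<ge> 0) \<and>
     (\<forall>n. \<forall>x>0. ((deriv ^^ n) g has_real_derivative (deriv ^^ Suc n) g x) (at x)) \<and>
     (\<forall>n\<ge>1. \<forall>x>0. (-1) ^ (n - 1) * (deriv ^^ n) g x \<ge> 0)"

definition nu_bar :: "real measure \<Rightarrow> real \<Rightarrow> real" where
  "nu_bar \<nu> t = measure \<nu> {t<..}"

text \<open>Standing assumption: Phi(l) = int (1 - e^(-l x)) nu(dx) with nu a Levy measure on (0,oo),
  nu(0,oo) = oo, Phi special Bernstein, and the potential measure of the subordinator
  (characterized by its Laplace transform 1/Phi) has a non-increasing density u with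
  u(t) \<le> C t^(beta-1) near 0.\<close>
definition standing_assumption :: "(real \<Rightarrow> real) \<Rightarrow> real measure \<Rightarrow> (real \<Rightarrow> real) \<Rightarrow> bool" where
  "standing_assumption \<Phi> \<nu> u \<longleftrightarrow>
     sets \<nu> = sets borel \<and>
     emeasure \<nu> {..0} = 0 \<and>
     (\<integral>\<^sup>+ x. ennreal (min 1 x) \<partial>\<nu>) < \<infinity> \<and>
     emeasure \<nu> {0<..} = \<infinity> \<and>
     (\<forall>l>0. ennreal (\<Phi> l) = (\<integral>\<^sup>+ x. ennreal (1 - exp (- l * x)) \<partial>\<nu>)) \<and>
     bernstein \<Phi> \<and>
     bernstein (\<lambda>l. l / \<Phi> l) \<and>
     (\<forall>t>0. u t \<ge> 0) \<and>
     (\<forall>s t. 0 < s \<longrightarrow> s \<le> t \<longrightarrow> u t \<le> u s) \<and>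
     (\<forall>l>0. (\<integral>\<^sup>+ t\<in>{0<..}. ennreal (exp (- l * t) * u t) \<partial>lborel) = ennreal (1 / \<Phi> l)) \<and>
     (\<exists>t0 C \<beta>. t0 > 0 \<and> C > 0 \<and> 0 < \<beta> \<and> \<beta> < 1 \<and>
        (\<forall>t. 0 < t \<and> t < t0 \<longrightarrow> u t \<le> C * t powr (\<beta> - 1)))"

text \<open>Solution in C([0,oo),X) of  d^Phi_t f(t) = xi + F f(t) (t > 0), f(0) = f0, where
  d^Phi_t f(t) = d/dt int_0^t nu_bar(t-s) (f(s) - f(0)) ds.\<close>
definition caputo_solution ::
  "real measure \<Rightarrow> ('a::banach \<Rightarrow> 'a) \<Rightarrow> 'a \<Rightarrow> 'a \<Rightarrow> (real \<Rightarrow> 'a) \<Rightarrow> bool" where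
  "caputo_solution \<nu> F \<xi> f0 f \<longleftrightarrow>
     continuous_on {0..} f \<and> f 0 = f0 \<and>
     (\<forall>t>0. ((\<lambda>\<tau>. integral {0..\<tau>} (\<lambda>s. nu_bar \<nu> (\<tau> - s) *\<^sub>R (f s - f 0)))
               has_vector_derivative (\<xi> + F (f t))) (at t))"

end

theory Submission
  imports Defs
begin

text \<open>
  The difference \<open>h = f - g\<close> of two solutions solves \<open>\<partial>\<^sup>\<Phi>\<^sub>t h = F h\<close>, \<open>h 0 = 0\<close>. With the kernel
  \<open>k = nu_bar \<nu>\<close> and the primitive \<open>H t = \<integral>\<^sub>0\<^sup>t h\<close>, integrating once gives \<open>(k * h) t = F (H t)\<close>.
  Suppose \<open>H\<close> vanishes on \<open>[0,S]\<close> and let \<open>t\<close> maximise \<open>\<parallel>H\<parallel>\<close> on \<open>[0,S+\<delta>]\<close>. Writing \<open>(k * h) t\<close> as the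
  limit of \<open>\<epsilon>\<^sup>-\<^sup>1 \<integral>\<^sub>0\<^sup>t k (t - r) (H r - H (r - \<epsilon>)) dr\<close> and using that \<open>k\<close> is non-increasing, maximality
  yields the maximum principle \<open>k (t - S) \<parallel>H t\<parallel> \<le> \<parallel>(k * h) t\<parallel> \<le> \<parallel>F\<parallel> \<parallel>H t\<parallel>\<close>. As \<open>\<nu>\<close> has infinite
  mass, \<open>k\<close> is unbounded near \<open>0\<close>; choosing \<open>k \<delta> > \<parallel>F\<parallel>\<close> forces \<open>H t = 0\<close>, and stepping by \<open>\<delta>\<close> gives
  \<open>H = 0\<close>, hence \<open>h = 0\<close>.
\<close>

section \<open>Integrability of continuous functions against a nonnegative weight\<close>

lemma integrable_on_weighted_approximation:
  fixes f :: "'n::euclidean_space \<Rightarrow> 'a::banach" and w :: "'n \<Rightarrow> real"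
  assumes w: "w integrable_on cbox a b" and w_nonneg: "\<And>x. x \<in> cbox a b \<Longrightarrow> 0 \<le> w x"
    and approx: "\<And>e. e > 0 \<Longrightarrow>
      \<exists>\<psi>. \<psi> integrable_on cbox a b \<and> (\<forall>x\<in>cbox a b. norm (f x - \<psi> x) \<le> e * w x)"
  shows "f integrable_on cbox a b"
proof -
  define \<Sigma> :: "('n \<times> 'n set) set \<Rightarrow> ('n \<Rightarrow> 'a) \<Rightarrow> 'a"
    where "\<Sigma> \<D> g = (\<Sum>(x,K)\<in>\<D>. Henstock_Kurzweil_Integration.content K *\<^sub>R g x)" for \<D> g
  define \<Sigma>w :: "('n \<times> 'n set) set \<Rightarrow> real"
    where "\<Sigma>w \<D> = (\<Sum>(x,K)\<in>\<D>. Henstock_Kurzweil_Integration.content K * w x)" for \<D>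
  define W where "W = integral (cbox a b) w"
  have "W \<ge> 0"
    unfolding W_def using w w_nonneg by (rule integral_nonneg)
  show ?thesis
    unfolding integrable_Cauchy \<Sigma>_def[symmetric]
  proof (intro allI impI)
    fix \<epsilon> :: real assume "\<epsilon> > 0"
    define e where "e = \<epsilon> / 4 / (W + 1)"
    have "e > 0" "e * (W + 1) = \<epsilon> / 4"
      using \<open>\<epsilon> > 0\<close> \<open>W \<ge> 0\<close> unfolding e_def by (simp, simp add: field_simps)
    obtain \<psi> where \<psi>: "\<psi> integrable_on cbox a b" and f_\<psi>: "\<And>x. x \<in> cbox a b \<Longrightarrow> norm (f x - \<psi> x) \<le> e * w x"
      using approx[OF \<open>e > 0\<close>] by blast
    have "\<epsilon> / 2 > 0"
      using \<open>\<epsilon> > 0\<close> by simp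
    from \<psi>[unfolded integrable_Cauchy, rule_format, OF this]
    obtain \<gamma>1 where "gauge \<gamma>1" and \<gamma>1: "\<forall>\<D>1 \<D>2. \<D>1 tagged_division_of cbox a b \<and> \<gamma>1 fine \<D>1 \<and>
        \<D>2 tagged_division_of cbox a b \<and> \<gamma>1 fine \<D>2 \<longrightarrow> norm (\<Sigma> \<D>1 \<psi> - \<Sigma> \<D>2 \<psi>) < \<epsilon> / 2"
      unfolding \<Sigma>_def by blast
    obtain \<gamma>2 where "gauge \<gamma>2" and \<gamma>2: "\<And>\<D>. \<D> tagged_division_of cbox a b \<Longrightarrow> \<gamma>2 fine \<D> \<Longrightarrow>
        norm (\<Sigma>w \<D> - W) < 1"
      using has_integral_integral[THEN iffD1, OF w, unfolded has_integral, rule_format, OF zero_less_one]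
      unfolding \<Sigma>w_def W_def by (auto simp: split_def)
    have close: "norm (\<Sigma> \<D> f - \<Sigma> \<D> \<psi>) \<le> \<epsilon> / 4"
      if \<D>: "\<D> tagged_division_of cbox a b" "\<gamma>2 fine \<D>" for \<D>
    proof -
      have "norm (\<Sigma> \<D> f - \<Sigma> \<D> \<psi>) = norm (\<Sigma> \<D> (\<lambda>x. f x - \<psi> x))"
        by (simp add: \<Sigma>_def split_def sum_subtractf scaleR_diff_right)
      also have "\<dots> \<le> e * \<Sigma>w \<D>"
        unfolding \<Sigma>_def \<Sigma>w_def sum_distrib_left
      proof (rule sum_norm_le)
        fix p assume "p \<in> \<D>"
        then obtain x K where p: "p = (x, K)" "x \<in> cbox a b"
          using tagged_division_ofD(2,3)[OF \<D>(1)] by (metis prod.exhaust subsetD)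
        then show "norm (case p of (x, K) \<Rightarrow> Henstock_Kurzweil_Integration.content K *\<^sub>R (f x - \<psi> x))
            \<le> e * (case p of (x, K) \<Rightarrow> Henstock_Kurzweil_Integration.content K * w x)"
          using mult_left_mono[OF f_\<psi>[OF p(2)] content_pos_le[of K]] by (simp add: mult_ac flip: scaleR_diff_right)
      qed
      also have "\<dots> \<le> e * (W + 1)"
        using \<gamma>2[OF \<D>] \<open>e > 0\<close> by (intro mult_left_mono) (auto simp: dist_norm abs_less_iff)
      finally show ?thesis using \<open>e * (W + 1) = \<epsilon> / 4\<close> by simp
    qed
    show "\<exists>\<gamma>. gauge \<gamma> \<and> (\<forall>\<D>1 \<D>2. \<D>1 tagged_division_of cbox a b \<and> \<gamma> fine \<D>1 \<and>
        \<D>2 tagged_division_of cbox a b \<and> \<gamma> fine \<D>2 \<longrightarrow> norm (\<Sigma> \<D>1 f - \<Sigma> \<D>2 f) < \<epsilon>)"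
    proof (intro exI conjI allI impI)
      show "gauge (\<lambda>x. \<gamma>1 x \<inter> \<gamma>2 x)"
        using \<open>gauge \<gamma>1\<close> \<open>gauge \<gamma>2\<close> by (rule gauge_Int)
      fix \<D>1 \<D>2 assume "\<D>1 tagged_division_of cbox a b \<and> (\<lambda>x. \<gamma>1 x \<inter> \<gamma>2 x) fine \<D>1 \<and>
          \<D>2 tagged_division_of cbox a b \<and> (\<lambda>x. \<gamma>1 x \<inter> \<gamma>2 x) fine \<D>2"
      then have "norm (\<Sigma> \<D>1 \<psi> - \<Sigma> \<D>2 \<psi>) < \<epsilon> / 2"
        and "norm (\<Sigma> \<D>1 f - \<Sigma> \<D>1 \<psi>) \<le> \<epsilon> / 4" "norm (\<Sigma> \<D>2 f - \<Sigma> \<D>2 \<psi>) \<le> \<epsilon> / 4"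
        using \<gamma>1 close by (simp_all add: fine_Int)
      then show "norm (\<Sigma> \<D>1 f - \<Sigma> \<D>2 f) < \<epsilon>"
        using norm_diff_triangle_ineq[of "\<Sigma> \<D>1 \<psi>" "\<Sigma> \<D>1 f - \<Sigma> \<D>1 \<psi>" "\<Sigma> \<D>2 \<psi>" "\<Sigma> \<D>2 f - \<Sigma> \<D>2 \<psi>"]
          norm_triangle_ineq4[of "\<Sigma> \<D>1 f - \<Sigma> \<D>1 \<psi>" "\<Sigma> \<D>2 f - \<Sigma> \<D>2 \<psi>"]
        by simp
    qed
  qed
qed

lemma integrable_on_nonneg_scaleR_continuous:
  fixes g :: "real \<Rightarrow> real" and \<phi> :: "real \<Rightarrow> 'a::banach"
  assumes g: "g integrable_on {a..b}" and g_nonneg: "\<And>x. x \<in> {a..b} \<Longrightarrow> 0 \<le> g x"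
    and \<phi>: "continuous_on {a..b} \<phi>"
  shows "(\<lambda>x. g x *\<^sub>R \<phi> x) integrable_on {a..b}"
proof (cases "a \<le> b")
  case False
  then show ?thesis by (simp add: integrable_on_empty)
next
  case True
  show ?thesis
    unfolding cbox_interval[symmetric]
  proof (rule integrable_on_weighted_approximation)
    show "g integrable_on cbox a b" "\<And>x. x \<in> cbox a b \<Longrightarrow> 0 \<le> g x"
      using g g_nonneg by auto
    fix e :: real assume "e > 0"
    obtain d where "d > 0" and d: "\<And>x y. x \<in> {a..b} \<Longrightarrow> y \<in> {a..b} \<Longrightarrow> dist y x < d \<Longrightarrow> dist (\<phi> y) (\<phi> x) < e"
      using uniformly_continuous_onE[OF compact_uniformly_continuous[OF \<phi> compact_Icc] \<open>e > 0\<close>] by metis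
    obtain n :: nat where n: "(b - a) / d < real n"
      using reals_Archimedean2 by blast
    then have "n > 0"
      using \<open>d > 0\<close> \<open>a \<le> b\<close> by (metis divide_nonneg_pos gr0I leD diff_ge_0_iff_ge of_nat_0)
    define h where "h = (b - a) / real n"
    have "0 \<le> h" "h < d" "a + real n * h = b"
      using \<open>a \<le> b\<close> \<open>n > 0\<close> n \<open>d > 0\<close> by (auto simp: h_def field_simps)
    \<comment> \<open>freeze \<open>\<phi>\<close> on successive grid cells of width \<open>h\<close>\<close>
    have "\<exists>\<psi>. \<psi> integrable_on {a..a + real m * h} \<and>
        (\<forall>x\<in>{a..a + real m * h}. norm (g x *\<^sub>R \<phi> x - \<psi> x) \<le> e * g x)" if "m \<le> n" for m
      using that
    proof (induction m)
      case 0
      show ?case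
        using integrable_on_refl[of "\<lambda>x. g x *\<^sub>R \<phi> x" a] g_nonneg[of a] \<open>a \<le> b\<close> \<open>e > 0\<close>
        by (intro exI[of _ "\<lambda>x. g x *\<^sub>R \<phi> x"]) (simp add: cbox_interval)
    next
      case (Suc m)
      then obtain \<psi> where \<psi>: "\<psi> integrable_on {a..a + real m * h}"
        and \<psi>_close: "\<forall>x\<in>{a..a + real m * h}. norm (g x *\<^sub>R \<phi> x - \<psi> x) \<le> e * g x"
        by auto
      define p where "p = a + real m * h"
      define \<psi>' where "\<psi>' x = (if x \<le> p then \<psi> x else g x *\<^sub>R \<phi> p)" for x
      have "a \<le> p" "p + h \<le> b"
        using Suc.prems \<open>0 \<le> h\<close> \<open>a + real n * h = b\<close> mult_right_mono[of "real (Suc m)" "real n" h]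
        by (auto simp: p_def algebra_simps)
      have "\<psi>' integrable_on {a..p}"
        using \<psi> unfolding p_def by (rule integrable_eq) (simp add: \<psi>'_def p_def)
      moreover have "\<psi>' integrable_on {p..p + h}"
      proof (rule integrable_spike_finite[of "{p}"])
        show "(\<lambda>x. g x *\<^sub>R \<phi> p) integrable_on {p..p + h}"
          using \<open>a \<le> p\<close> \<open>p + h \<le> b\<close>
          by (intro integrable_on_scaleR_left integrable_on_subinterval[OF g]) auto
      qed (auto simp: \<psi>'_def)
      moreover have "p \<le> p + h"
        using \<open>0 \<le> h\<close> by simp
      ultimately have "\<psi>' integrable_on {a..p + h}"
        using Henstock_Kurzweil_Integration.integrable_combine[OF \<open>a \<le> p\<close>] by blast
      moreover have "norm (g x *\<^sub>R \<phi> x - \<psi>' x) \<le> e * g x" if x: "x \<in> {a..p + h}" for x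
      proof (cases "x \<le> p")
        case True
        then show ?thesis
          using \<psi>_close x by (auto simp: \<psi>'_def p_def)
      next
        case False
        then have "x \<in> {a..b}" "p \<in> {a..b}" "dist x p < d"
          using x \<open>a \<le> p\<close> \<open>p + h \<le> b\<close> \<open>h < d\<close> by (auto simp: dist_real_def)
        then have "g x * norm (\<phi> x - \<phi> p) \<le> g x * e"
          using d[of p x] g_nonneg by (intro mult_left_mono) (auto simp: dist_norm)
        then show ?thesis
          using False g_nonneg[OF \<open>x \<in> {a..b}\<close>] by (simp add: \<psi>'_def mult.commute flip: scaleR_diff_right)
      qed
      ultimately show ?case
        by (auto simp: p_def algebra_simps)
    qed
    from this[OF order_refl] show "\<exists>\<psi>. \<psi> integrable_on cbox a b \<and> (\<forall>x\<in>cbox a b. norm (g x *\<^sub>R \<phi> x - \<psi> x) \<le> e * g x)"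
      using \<open>a + real n * h = b\<close> by simp
  qed
qed

section \<open>The tail of a Levy measure\<close>

lemma sum_grid_indicator_le:
  fixes N :: nat and x :: real
  assumes "N > 0"
  shows "(\<Sum>i\<in>{1..N-1}. if real i / N < x then 1 / real N else 0) \<le> min 1 (max 0 x)"
proof -
  have "(\<Sum>i\<in>{1..m}. if real i / N < x then 1 / real N else 0) \<le> max 0 x" for m
  proof (induction m)
    case (Suc m)
    show ?case
    proof (cases "real (Suc m) / N < x")
      case True
      have "(\<Sum>i\<in>{1..Suc m}. if real i / N < x then 1 / real N else 0) \<le> (\<Sum>i\<in>{1..Suc m}. 1 / real N)"
        by (rule sum_mono) simp
      then show ?thesis
        using True by simp
    qed (use Suc.IH in simp)
  qed simp
  moreover have "(\<Sum>i\<in>{1..N-1}. if real i / N < x then 1 / real N else 0) \<le> (\<Sum>i\<in>{1..N-1}. 1 / real N)"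
    by (rule sum_mono) simp
  moreover have "(\<Sum>i\<in>{1..N-1}. 1 / real N) \<le> 1"
    using \<open>N > 0\<close> by (simp add: field_simps)
  ultimately show ?thesis
    by (meson min.bounded_iff order_trans)
qed

locale levy_tail =
  fixes \<nu> :: "real measure"
  assumes sets_eq_borel: "sets \<nu> = sets borel"
    and min_1_moment_finite: "(\<integral>\<^sup>+ x. ennreal (min 1 x) \<partial>\<nu>) < \<infinity>"
    and emeasure_positive_infinite: "emeasure \<nu> {0<..} = \<infinity>"
begin

abbreviation k :: "real \<Rightarrow> real" where
  "k \<equiv> nu_bar \<nu>"

lemma greaterThan_in_sets [measurable]: "{x<..} \<in> sets \<nu>"
  using sets_eq_borel by simp

lemma nu_bar_nonneg: "0 \<le> k x"
  by (simp add: nu_bar_def)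

text \<open>For \<open>x \<le> 0\<close> the set \<open>{x<..}\<close> has infinite measure, on which \<^const>\<open>measure\<close> returns \<open>0\<close>.\<close>
lemma nu_bar_nonpos: "x \<le> 0 \<Longrightarrow> k x = 0"
  using emeasure_mono[of "{0<..}" "{x<..}" \<nu>] emeasure_positive_infinite
  by (simp add: nu_bar_def measure_def top_unique)

lemma emeasure_greaterThan_finite:
  assumes "x > 0"
  shows "emeasure \<nu> {x<..} < \<infinity>"
proof -
  have "emeasure \<nu> {x<..} * ennreal (min 1 x) = (\<integral>\<^sup>+ y. ennreal (min 1 x) * indicator {x<..} y \<partial>\<nu>)"
    by (simp add: nn_integral_cmult_indicator mult.commute)
  also have "\<dots> \<le> (\<integral>\<^sup>+ y. ennreal (min 1 y) \<partial>\<nu>)"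
    by (rule nn_integral_mono) (auto simp: indicator_def ennreal_leI)
  also have "\<dots> < \<infinity>"
    by (rule min_1_moment_finite)
  finally show ?thesis
    using \<open>x > 0\<close> by (auto simp: ennreal_mult_less_top)
qed

lemma ennreal_nu_bar: "x > 0 \<Longrightarrow> ennreal (k x) = emeasure \<nu> {x<..}"
  using emeasure_greaterThan_finite by (simp add: nu_bar_def measure_def ennreal_enn2real_if less_top[symmetric])

lemma nu_bar_antimono:
  assumes "0 < x" "x \<le> y"
  shows "k y \<le> k x"
proof -
  have "ennreal (k y) \<le> ennreal (k x)"
    using assms emeasure_mono[of "{y<..}" "{x<..}" \<nu>] by (simp add: ennreal_nu_bar)
  then show ?thesis
    by (simp add: nu_bar_nonneg)
qed

lemma nu_bar_unbounded: "\<exists>\<delta>>0. B < k \<delta>"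
proof (rule ccontr)
  assume "\<not> ?thesis"
  then have bounded: "k \<delta> \<le> B" if "\<delta> > 0" for \<delta>
    using that not_less by blast
  define A where "A n = {1 / real (Suc n)<..}" for n
  have "incseq A"
    by (auto simp: A_def incseq_def frac_le intro: order.strict_trans1[rotated])
  have "(\<Union>n. A n) = {0<..}"
  proof (intro equalityI subsetI)
    fix x :: real assume "x \<in> {0<..}"
    then obtain n where "inverse (real (Suc n)) < x"
      using reals_Archimedean by auto
    then show "x \<in> (\<Union>n. A n)"
      by (auto simp: A_def inverse_eq_divide)
  next
    fix x assume "x \<in> (\<Union>n. A n)"
    then obtain n where "1 / real (Suc n) < x"
      by (auto simp: A_def)
    moreover have "0 < 1 / real (Suc n)"
      by simp
    ultimately have "0 < x"
      by (rule order.strict_trans[rotated])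
    then show "x \<in> {0<..}"
      by simp
  qed
  have "\<infinity> = emeasure \<nu> (\<Union>n. A n)"
    using \<open>(\<Union>n. A n) = {0<..}\<close> emeasure_positive_infinite by simp
  also have "\<dots> = (SUP n. emeasure \<nu> (A n))"
    using \<open>incseq A\<close> by (intro SUP_emeasure_incseq[symmetric]) (auto simp: A_def[abs_def])
  also have "\<dots> \<le> ennreal B"
    using ennreal_nu_bar ennreal_leI[OF bounded] by (intro SUP_least) (simp add: A_def)
  finally show False
    by (simp add: top_unique)
qed

lemma nu_bar_integrable_on_pos:
  assumes "0 < p"
  shows "k integrable_on {p..q}"
proof -
  have "mono_on {p..q} (\<lambda>x. - k x)"
    using assms nu_bar_antimono by (auto intro: mono_onI)
  then have "(\<lambda>x. - k x) integrable_on {p..q}"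
    by (rule integrable_on_mono_on)
  then show ?thesis
    using integrable_neg by fastforce
qed

lemma integral_nu_bar_le_left_sum:
  fixes N :: nat
  assumes "N > 0"
  shows "integral {1/N..(real m + 1)/N} k \<le> (\<Sum>i\<in>{1..m}. k (real i / N) / N)"
proof (induction m)
  case (Suc m)
  let ?p = "(real m + 1) / N" and ?q = "(real (Suc m) + 1) / N"
  have le: "1 / real N \<le> ?p" "?p \<le> ?q" and "0 < ?p"
    using \<open>N > 0\<close> by (auto simp: divide_right_mono)
  have "k integrable_on {1/N..?q}"
    using \<open>N > 0\<close> by (intro nu_bar_integrable_on_pos) simp
  then have "integral {1/N..?q} k = integral {1/N..?p} k + integral {?p..?q} k"
    by (rule Henstock_Kurzweil_Integration.integral_combine[OF le, symmetric])
  also have "integral {?p..?q} k \<le> integral {?p..?q} (\<lambda>_. k ?p)"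
    using \<open>0 < ?p\<close> \<open>?p \<le> ?q\<close>
    by (intro integral_le nu_bar_integrable_on_pos) (auto intro: nu_bar_antimono)
  also have "integral {?p..?q} (\<lambda>_. k ?p) = k (real (Suc m) / N) / N"
    using \<open>?p \<le> ?q\<close> \<open>N > 0\<close> by (simp add: field_simps)
  finally show ?case
    using Suc.IH by (simp add: add.commute)
qed simp

text \<open>A discrete form of \<open>\<integral>\<^sub>0\<^sup>1 \<nu>{x<..} dx = \<integral> min 1 x d\<nu>\<close>: the left Riemann sums of \<open>k\<close> are
  integrals of step functions below \<open>min 1 x\<close>.\<close>
lemma left_sum_nu_bar_le_moment:
  fixes N :: nat
  assumes "N > 0"
  shows "ennreal (\<Sum>i\<in>{1..N-1}. k (real i / N) / N) \<le> (\<integral>\<^sup>+ x. ennreal (min 1 x) \<partial>\<nu>)"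
proof -
  have "ennreal (\<Sum>i\<in>{1..N-1}. k (real i / N) / N) = (\<Sum>i\<in>{1..N-1}. ennreal (1 / N) * emeasure \<nu> {real i / N<..})"
    using \<open>N > 0\<close> by (auto simp: nu_bar_nonneg ennreal_nu_bar ennreal_mult' divide_inverse mult.commute
        simp flip: sum_ennreal intro!: sum.cong)
  also have "\<dots> = (\<Sum>i\<in>{1..N-1}. \<integral>\<^sup>+ x. ennreal (1 / N) * indicator {real i / N<..} x \<partial>\<nu>)"
    by (simp add: nn_integral_cmult_indicator)
  also have "\<dots> = (\<integral>\<^sup>+ x. (\<Sum>i\<in>{1..N-1}. ennreal (1 / N) * indicator {real i / N<..} x) \<partial>\<nu>)"
    by (rule nn_integral_sum[symmetric]) simp
  also have "\<dots> \<le> (\<integral>\<^sup>+ x. ennreal (min 1 x) \<partial>\<nu>)"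
  proof (rule nn_integral_mono)
    fix x :: real
    have "(\<Sum>i\<in>{1..N-1}. ennreal (1 / N) * indicator {real i / N<..} x)
        = (\<Sum>i\<in>{1..N-1}. ennreal (if real i / N < x then 1 / real N else 0))"
      by (intro sum.cong) (auto simp: indicator_def)
    also have "\<dots> = ennreal (\<Sum>i\<in>{1..N-1}. if real i / N < x then 1 / real N else 0)"
      by (rule sum_ennreal) simp
    also have "\<dots> \<le> ennreal (min 1 (max 0 x))"
      using sum_grid_indicator_le[OF \<open>N > 0\<close>] by (rule ennreal_leI)
    also have "\<dots> = ennreal (min 1 x)"
      by (auto simp: min_def max_def ennreal_eq_0_iff)
    finally show "(\<Sum>i\<in>{1..N-1}. ennreal (1 / N) * indicator {real i / N<..} x) \<le> ennreal (min 1 x)" .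
  qed
  finally show ?thesis .
qed

lemma integral_nu_bar_le_moment:
  fixes N :: nat
  assumes "N > 0"
  shows "integral {1/N..1} k \<le> enn2real (\<integral>\<^sup>+ x. ennreal (min 1 x) \<partial>\<nu>)"
proof -
  have "integral {1/N..1} k \<le> (\<Sum>i\<in>{1..N-1}. k (real i / N) / N)"
    using integral_nu_bar_le_left_sum[OF assms, of "N - 1"] assms by (simp add: of_nat_diff)
  also have "\<dots> \<le> enn2real (\<integral>\<^sup>+ x. ennreal (min 1 x) \<partial>\<nu>)"
  proof -
    have "ennreal (\<Sum>i\<in>{1..N-1}. k (real i / N) / N) \<le> ennreal (enn2real (\<integral>\<^sup>+ x. ennreal (min 1 x) \<partial>\<nu>))"
      using left_sum_nu_bar_le_moment[OF assms] min_1_moment_finite by (simp add: ennreal_enn2real)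
    then show ?thesis
      by (simp add: ennreal_le_iff)
  qed
  finally show ?thesis .
qed

lemma nu_bar_integrable_on_0_1: "k integrable_on {0..1}"
proof -
  define f where "f n x = (if 1 / real (Suc n) \<le> x then k x else 0)" for n x
  have f_integral: "(f n has_integral integral {1 / real (Suc n)..1} k) {0..1}" for n
  proof -
    define c where "c = 1 / real (Suc n)"
    have "0 \<le> c" "0 < c" "c \<le> 1"
      by (auto simp: c_def)
    have "(f n has_integral 0) {0..c}"
    proof (rule has_integral_spike_finite[of "{c}"])
      show "((\<lambda>_. 0) has_integral 0) {0..c}"
        by simp
    qed (auto simp: f_def c_def)
    moreover have "(f n has_integral integral {c..1} k) {c..1}"
      using integrable_integral[OF nu_bar_integrable_on_pos[OF \<open>0 < c\<close>]]
      by (rule has_integral_eq[rotated]) (auto simp: f_def c_def)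
    ultimately have "(f n has_integral 0 + integral {c..1} k) {0..1}"
      by (rule has_integral_combine[OF \<open>0 \<le> c\<close> \<open>c \<le> 1\<close>])
    then show ?thesis
      by (simp add: c_def)
  qed
  have "k integrable_on {0..1} \<and> ((\<lambda>n. integral {0..1} (f n)) \<longlongrightarrow> integral {0..1} k) sequentially"
  proof (rule monotone_convergence_increasing)
    show "f n integrable_on {0..1}" for n
      using f_integral by blast
    show "f n x \<le> f (Suc n) x" for n x
      using frac_le[of 1 1 "real (Suc n)" "real (Suc (Suc n))"] by (auto simp: f_def nu_bar_nonneg)
    show "(\<lambda>n. f n x) \<longlonglongrightarrow> k x" if "x \<in> {0..1}" for x
    proof (cases "x = 0")
      case False
      with that have "x > 0"
        by simp
      then obtain N where N: "inverse (real (Suc N)) < x"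
        using reals_Archimedean by blast
      have "f n x = k x" if "N \<le> n" for n
        using that N frac_le[of 1 1 "real (Suc N)" "real (Suc n)"] by (auto simp: f_def inverse_eq_divide)
      then show ?thesis
        by (intro tendsto_eventually eventually_sequentiallyI)
    qed (simp add: f_def nu_bar_nonpos)
    have "integral {0..1} (f n) \<in> {0..enn2real (\<integral>\<^sup>+ x. ennreal (min 1 x) \<partial>\<nu>)}" for n
      using integral_unique[OF f_integral] integral_nu_bar_le_moment[of "Suc n"]
        integral_nonneg[OF nu_bar_integrable_on_pos, of "1 / real (Suc n)" 1] nu_bar_nonneg
      by simp
    then show "bounded (range (\<lambda>n. integral {0..1} (f n)))"
      by (intro boundedI[where B = "enn2real (\<integral>\<^sup>+ x. ennreal (min 1 x) \<partial>\<nu>)"]) auto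
  qed
  then show ?thesis
    by blast
qed

lemma nu_bar_integrable_on: "k integrable_on {a..b}"
proof -
  define R where "R = \<bar>a\<bar> + \<bar>b\<bar> + 1"
  have "1 \<le> R"
    by (simp add: R_def)
  have "k integrable_on {-R..0}"
    by (rule integrable_eq[OF integrable_0]) (auto simp: nu_bar_nonpos)
  moreover have "k integrable_on {0..R}"
    using Henstock_Kurzweil_Integration.integrable_combine[of 0 1 R, OF _ \<open>1 \<le> R\<close> nu_bar_integrable_on_0_1
        nu_bar_integrable_on_pos] by simp
  ultimately have "k integrable_on {-R..R}"
    using Henstock_Kurzweil_Integration.integrable_combine[of "-R" 0 R] \<open>1 \<le> R\<close> by simp
  then show ?thesis
    by (rule integrable_on_subinterval) (auto simp: R_def)
qed

lemma integral_nu_bar_nonneg: "0 \<le> integral {a..b} k"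
  using nu_bar_integrable_on by (rule integral_nonneg) (simp add: nu_bar_nonneg)

lemma integral_nu_bar_tendsto_0: "((\<lambda>e. integral {0..e} k) \<longlongrightarrow> 0) (at_right 0)"
proof -
  have "continuous_on {0..1} (\<lambda>x. integral {0..x} k)"
    by (rule indefinite_integral_continuous_1[OF nu_bar_integrable_on])
  then have "((\<lambda>x. integral {0..x} k) \<longlongrightarrow> integral {0..0} k) (at 0 within {0..1})"
    unfolding continuous_on_def by (metis atLeastAtMost_iff order_refl zero_le_one)
  then show ?thesis
    using at_within_Icc_at_right[of "0::real" 1] by simp
qed

lemma nu_bar_reflect_integrable_on: "(\<lambda>r. k (c - r)) integrable_on {a..b}"
proof -
  have "(k \<circ> (+) c) integrable_on {-b..-a}"
    using integrable_on_shift_Icc_real nu_bar_integrable_on by blast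
  then show ?thesis
    using Henstock_Kurzweil_Integration.integrable_reflect_real[of "k \<circ> (+) c" "-a" "-b"] by (simp add: o_def)
qed

lemma integral_nu_bar_reflect: "integral {a..b} (\<lambda>r. k (c - r)) = integral {c-b..c-a} k"
proof -
  have "integral {a..b} (\<lambda>r. k (c - r)) = integral {-(-a)..-(-b)} (\<lambda>x. (k \<circ> (+) c) (- x))"
    by (simp add: o_def)
  also have "\<dots> = integral {-b..-a} (k \<circ> (+) c)"
    by (rule Henstock_Kurzweil_Integration.integral_reflect_real)
  also have "\<dots> = integral {-b+c..-a+c} k"
    by (rule integral_shift_Icc_real)
  finally show ?thesis
    by (simp add: algebra_simps)
qed

lemma nu_bar_conv_integrable_on:
  fixes \<phi> :: "real \<Rightarrow> 'a::banach"
  assumes "continuous_on {a..b} \<phi>"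
  shows "(\<lambda>r. k (c - r) *\<^sub>R \<phi> r) integrable_on {a..b}"
  using nu_bar_reflect_integrable_on _ assms
  by (rule integrable_on_nonneg_scaleR_continuous) (simp add: nu_bar_nonneg)

lemma norm_integral_nu_bar_conv_le:
  fixes \<phi> :: "real \<Rightarrow> 'a::banach"
  assumes "continuous_on {a..b} \<phi>" and bound: "\<And>r. r \<in> {a..b} \<Longrightarrow> norm (\<phi> r) \<le> B"
  shows "norm (integral {a..b} (\<lambda>r. k (c - r) *\<^sub>R \<phi> r)) \<le> B * integral {c-b..c-a} k"
proof -
  have "norm (integral {a..b} (\<lambda>r. k (c - r) *\<^sub>R \<phi> r)) \<le> integral {a..b} (\<lambda>r. B * k (c - r))"
  proof (rule integral_norm_bound_integral)
    show "(\<lambda>r. B * k (c - r)) integrable_on {a..b}"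
      using nu_bar_reflect_integrable_on by (rule integrable_on_mult_right)
    show "norm (k (c - r) *\<^sub>R \<phi> r) \<le> B * k (c - r)" if "r \<in> {a..b}" for r
      using mult_left_mono[OF bound[OF that] nu_bar_nonneg[of "c - r"]] by (simp add: nu_bar_nonneg mult.commute)
  qed (rule nu_bar_conv_integrable_on[OF assms(1)])
  also have "\<dots> = B * integral {c-b..c-a} k"
    by (simp add: integral_nu_bar_reflect)
  finally show ?thesis .
qed

lemma integral_nu_bar_conv_const: "integral {a..b} (\<lambda>r. k (c - r) *\<^sub>R v) = integral {c-b..c-a} k *\<^sub>R v"
  using integral_nu_bar_reflect
  by (simp add: integral_unique[OF has_integral_scaleR_left[OF integrable_integral[OF nu_bar_reflect_integrable_on]]])

end

section \<open>The homogeneous equation\<close>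

lemma integral_eq_0_on:
  fixes f :: "'n::euclidean_space \<Rightarrow> 'a::real_normed_vector"
  shows "(\<And>x. x \<in> S \<Longrightarrow> f x = 0) \<Longrightarrow> integral S f = 0"
  using integral_cong[of S f "\<lambda>_. 0"] by simp

locale caputo_homogeneous = levy_tail +
  fixes F :: "'a::banach \<Rightarrow> 'a" and h :: "real \<Rightarrow> 'a"
  assumes bounded_linear_F: "bounded_linear F"
    and continuous_h: "continuous_on {0..} h"
    and h_0: "h 0 = 0"
    and caputo_derivative: "\<And>t. t > 0 \<Longrightarrow>
      ((\<lambda>\<tau>. integral {0..\<tau>} (\<lambda>s. k (\<tau> - s) *\<^sub>R h s)) has_vector_derivative F (h t)) (at t)"
begin

definition kh :: "real \<Rightarrow> 'a" where
  "kh \<tau> = integral {0..\<tau>} (\<lambda>s. k (\<tau> - s) *\<^sub>R h s)"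

definition h_ext :: "real \<Rightarrow> 'a" where
  "h_ext x = h (max 0 x)"

definition H :: "real \<Rightarrow> 'a" where
  "H x = integral {0..x} h_ext"

lemma kh_has_vector_derivative: "t > 0 \<Longrightarrow> (kh has_vector_derivative F (h t)) (at t)"
  unfolding kh_def[abs_def] by (rule caputo_derivative)

lemma continuous_h_ext: "continuous_on UNIV h_ext"
  unfolding h_ext_def
  by (rule continuous_on_compose2[OF continuous_h, of UNIV "max 0"]) (auto intro!: continuous_intros)

lemma h_ext_nonpos: "x \<le> 0 \<Longrightarrow> h_ext x = 0"
  by (simp add: h_ext_def h_0 max_def)

lemma h_ext_eq: "0 \<le> x \<Longrightarrow> h_ext x = h x"
  by (simp add: h_ext_def)

lemma h_ext_integrable_on: "h_ext integrable_on {a..b}"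
  by (rule integrable_continuous_real) (rule continuous_on_subset[OF continuous_h_ext], simp)

lemma H_nonpos: "x \<le> 0 \<Longrightarrow> H x = 0"
  unfolding H_def by (rule integral_eq_0_on) (auto simp: h_ext_nonpos)

lemma H_diff_eq_integral:
  assumes "x \<le> y"
  shows "H y - H x = integral {x..y} h_ext"
proof (cases "0 \<le> x")
  case True
  then show ?thesis
    unfolding H_def using Henstock_Kurzweil_Integration.integral_combine[OF True assms h_ext_integrable_on]
    by (simp add: algebra_simps)
next
  case False
  then have "integral {x..y} h_ext = integral {x..max 0 y} h_ext"
    using Henstock_Kurzweil_Integration.integral_combine[of x 0 y h_ext] h_ext_integrable_on
      integral_eq_0_on[of "{x..0}" h_ext] integral_eq_0_on[of "{x..y}" h_ext] assms
    by (cases "0 \<le> y") (auto simp: h_ext_nonpos)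
  also have "\<dots> = H y"
    using Henstock_Kurzweil_Integration.integral_combine[of x 0 y h_ext] h_ext_integrable_on
      integral_eq_0_on[of "{x..0}" h_ext] False H_nonpos[of y]
    by (cases "0 \<le> y") (auto simp: H_def h_ext_nonpos)
  finally show ?thesis
    using False H_nonpos[of x] by simp
qed

lemma continuous_H: "continuous_on UNIV H"
proof -
  have "isCont H x" for x
  proof -
    define R where "R = \<bar>x\<bar> + 1"
    have "continuous_on {-R..R} (\<lambda>y. integral {-R..y} h_ext)"
      by (rule indefinite_integral_continuous_1[OF h_ext_integrable_on])
    moreover have "H y = integral {-R..y} h_ext" if "y \<in> {-R..R}" for y
      using H_diff_eq_integral[of "-R" y] that H_nonpos[of "-R"] by (simp add: R_def)
    ultimately have "continuous_on {-R..R} H"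
      using continuous_on_eq by (metis (no_types, lifting))
    then show "isCont H x"
      by (rule continuous_on_interior) (auto simp: R_def)
  qed
  then show ?thesis
    by (simp add: continuous_on_eq_continuous_at)
qed

lemma norm_H_diff_le:
  assumes "r \<le> s" "\<And>y. y \<in> {r..s} \<Longrightarrow> norm (h_ext y) \<le> L"
  shows "norm (H s - H r) \<le> L * (s - r)"
  unfolding H_diff_eq_integral[OF assms(1)]
  by (rule integral_bound[OF assms(1) continuous_on_subset[OF continuous_h_ext] assms(2)]) auto

lemma norm_H_difference_quotient_le:
  assumes "0 < \<epsilon>" "\<And>s. s \<in> {r-\<epsilon>..r} \<Longrightarrow> norm (h_ext s - h_ext r) \<le> \<eta>"
  shows "norm ((1 / \<epsilon>) *\<^sub>R (H r - H (r - \<epsilon>)) - h_ext r) \<le> \<eta>"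
proof -
  have "(H r - H (r - \<epsilon>)) - \<epsilon> *\<^sub>R h_ext r = integral {r-\<epsilon>..r} h_ext - integral {r-\<epsilon>..r} (\<lambda>_. h_ext r)"
    using H_diff_eq_integral[of "r - \<epsilon>" r] assms(1) by simp
  also have "\<dots> = integral {r-\<epsilon>..r} (\<lambda>s. h_ext s - h_ext r)"
    by (rule integral_diff[symmetric]) (auto simp: h_ext_integrable_on)
  also have "norm \<dots> \<le> \<eta> * (r - (r - \<epsilon>))"
    using assms by (intro integral_bound)
      (auto intro!: continuous_intros continuous_on_subset[OF continuous_h_ext])
  finally have "norm (\<epsilon> *\<^sub>R ((1 / \<epsilon>) *\<^sub>R (H r - H (r - \<epsilon>)) - h_ext r)) \<le> \<epsilon> * \<eta>"
    using assms(1) by (simp add: algebra_simps)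
  then show ?thesis
    using assms(1) by simp
qed

lemma kh_0: "kh 0 = 0"
  unfolding kh_def by (rule integral_eq_0_on) (simp add: nu_bar_nonpos)

lemma kh_tendsto_0: "(kh \<longlongrightarrow> 0) (at_right 0)"
proof -
  have "compact (h ` {0..1})"
    by (rule compact_continuous_image[OF continuous_on_subset[OF continuous_h]]) auto
  then obtain B where B: "\<And>x. x \<in> {0..1} \<Longrightarrow> norm (h x) \<le> B"
    using compact_imp_bounded bounded_iff by (metis imageI)
  show ?thesis
  proof (rule Lim_null_comparison)
    show "\<forall>\<^sub>F \<tau> in at_right 0. norm (kh \<tau>) \<le> B * integral {0..\<tau>} k"
    proof (rule eventually_at_rightI[of 0 1])
      fix \<tau> :: real assume \<tau>: "\<tau> \<in> {0<..<1}"
      have "norm (kh \<tau>) \<le> B * integral {\<tau>-\<tau>..\<tau>-0} k"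
        unfolding kh_def using \<tau> B
        by (intro norm_integral_nu_bar_conv_le) (auto intro: continuous_on_subset[OF continuous_h])
      then show "norm (kh \<tau>) \<le> B * integral {0..\<tau>} k"
        by simp
    qed simp
    show "((\<lambda>\<tau>. B * integral {0..\<tau>} k) \<longlongrightarrow> 0) (at_right 0)"
      using tendsto_mult_right_zero[OF integral_nu_bar_tendsto_0] by simp
  qed
qed

lemma kh_eq_F_H:
  assumes "0 \<le> t"
  shows "kh t = F (H t)"
proof (cases "t = 0")
  case True
  then show ?thesis
    using kh_0 H_nonpos[of 0] linear_0[OF bounded_linear.linear[OF bounded_linear_F]] by simp
next
  case False
  with assms have "0 < t"
    by simp
  have "continuous (at x within {0..t}) kh" if "x \<in> {0..t}" for x
  proof (cases "x = 0")
    case True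
    then show ?thesis
      using kh_tendsto_0 kh_0 at_within_Icc_at_right[OF \<open>0 < t\<close>] by (simp add: continuous_within)
  next
    case False
    with that have "0 < x"
      by simp
    then have "isCont kh x"
      by (rule has_vector_derivative_continuous[OF kh_has_vector_derivative])
    then show ?thesis
      by (rule continuous_at_imp_continuous_at_within)
  qed
  then have "continuous_on {0..t} kh"
    by (simp add: continuous_on_eq_continuous_within)
  then have "((\<lambda>x. F (h x)) has_integral kh t - kh 0) {0..t}"
    using assms by (intro fundamental_theorem_of_calculus_interior) (auto intro: kh_has_vector_derivative)
  then have "kh t = integral {0..t} (\<lambda>x. F (h x))"
    using kh_0 by (simp add: integral_unique)
  also have "\<dots> = integral {0..t} (\<lambda>x. F (h_ext x))"
    by (rule integral_cong) (simp add: h_ext_eq)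
  also have "\<dots> = F (H t)"
    using integral_linear[OF h_ext_integrable_on bounded_linear_F] by (simp add: H_def o_def)
  finally show ?thesis .
qed

lemma H_conv_integrable_on: "(\<lambda>r. k (c - r) *\<^sub>R H r) integrable_on {a..b}"
  by (rule nu_bar_conv_integrable_on) (rule continuous_on_subset[OF continuous_H], simp)

lemma H_shift_conv_integrable_on: "(\<lambda>r. k (c - r) *\<^sub>R H (r - e)) integrable_on {a..b}"
  by (rule nu_bar_conv_integrable_on) (auto intro!: continuous_on_compose2[OF continuous_H] continuous_intros)

lemma conv_H_difference_quotient_tendsto:
  "((\<lambda>\<epsilon>. (1 / \<epsilon>) *\<^sub>R integral {0..t} (\<lambda>r. k (t - r) *\<^sub>R (H r - H (r - \<epsilon>)))) \<longlongrightarrow> kh t) (at_right 0)"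
proof -
  define Q where "Q \<epsilon> r = (1 / \<epsilon>) *\<^sub>R (H r - H (r - \<epsilon>)) - h_ext r" for \<epsilon> r
  have error: "(1 / \<epsilon>) *\<^sub>R integral {0..t} (\<lambda>r. k (t - r) *\<^sub>R (H r - H (r - \<epsilon>))) - kh t
      = integral {0..t} (\<lambda>r. k (t - r) *\<^sub>R Q \<epsilon> r)" for \<epsilon>
  proof -
    have kh_t: "kh t = integral {0..t} (\<lambda>r. k (t - r) *\<^sub>R h_ext r)"
      unfolding kh_def by (rule integral_cong) (simp add: h_ext_eq)
    have "(\<lambda>r. k (t - r) *\<^sub>R h_ext r) integrable_on {0..t}"
      by (rule nu_bar_conv_integrable_on) (rule continuous_on_subset[OF continuous_h_ext], simp)
    moreover have "(\<lambda>r. k (t - r) *\<^sub>R (H r - H (r - \<epsilon>))) integrable_on {0..t}"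
      using integrable_diff[OF H_conv_integrable_on H_shift_conv_integrable_on] by (simp add: scaleR_diff_right)
    ultimately have "integral {0..t} (\<lambda>r. (1 / \<epsilon>) *\<^sub>R (k (t - r) *\<^sub>R (H r - H (r - \<epsilon>))))
        - integral {0..t} (\<lambda>r. k (t - r) *\<^sub>R h_ext r)
        = integral {0..t} (\<lambda>r. (1 / \<epsilon>) *\<^sub>R (k (t - r) *\<^sub>R (H r - H (r - \<epsilon>))) - k (t - r) *\<^sub>R h_ext r)"
      by (intro integral_diff[symmetric] integrable_cmul)
    then have "(1 / \<epsilon>) *\<^sub>R integral {0..t} (\<lambda>r. k (t - r) *\<^sub>R (H r - H (r - \<epsilon>))) - kh t
        = integral {0..t} (\<lambda>r. (1 / \<epsilon>) *\<^sub>R (k (t - r) *\<^sub>R (H r - H (r - \<epsilon>))) - k (t - r) *\<^sub>R h_ext r)"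
      by (simp only: kh_t integral_cmul)
    also have "\<dots> = integral {0..t} (\<lambda>r. k (t - r) *\<^sub>R Q \<epsilon> r)"
      by (rule integral_cong) (simp add: Q_def algebra_simps)
    finally show ?thesis .
  qed
  have error_small: "\<forall>\<^sub>F \<epsilon> in at_right 0. norm (integral {0..t} (\<lambda>r. k (t - r) *\<^sub>R Q \<epsilon> r)) \<le> \<eta> * integral {0..t} k"
    if "\<eta> > 0" for \<eta>
  proof -
    obtain d where "d > 0" and d: "\<And>x y. x \<in> {-1..t} \<Longrightarrow> y \<in> {-1..t} \<Longrightarrow> dist y x < d \<Longrightarrow> dist (h_ext y) (h_ext x) < \<eta>"
      using uniformly_continuous_onE[OF compact_uniformly_continuous[OF _ compact_Icc] \<open>\<eta> > 0\<close>]
        continuous_on_subset[OF continuous_h_ext] by (metis subset_UNIV)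
    show ?thesis
    proof (rule eventually_at_rightI[of 0 "min d 1"])
      fix \<epsilon> :: real assume \<epsilon>: "\<epsilon> \<in> {0<..<min d 1}"
      have "norm (Q \<epsilon> r) \<le> \<eta>" if "r \<in> {0..t}" for r
        unfolding Q_def
      proof (rule norm_H_difference_quotient_le)
        fix s assume "s \<in> {r - \<epsilon>..r}"
        moreover have "0 < \<epsilon>" "\<epsilon> < d" "\<epsilon> < 1"
          using \<epsilon> by auto
        ultimately have "r \<in> {-1..t}" "s \<in> {-1..t}" "dist s r < d"
          using that by (auto simp: dist_real_def)
        then show "norm (h_ext s - h_ext r) \<le> \<eta>"
          using d by (simp add: dist_norm less_imp_le)
      qed (use \<epsilon> in simp)
      then have "norm (integral {0..t} (\<lambda>r. k (t - r) *\<^sub>R Q \<epsilon> r)) \<le> \<eta> * integral {t-t..t-0} k"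
        by (intro norm_integral_nu_bar_conv_le) (auto simp: Q_def intro!: continuous_intros
            continuous_on_compose2[OF continuous_H] continuous_on_subset[OF continuous_h_ext])
      then show "norm (integral {0..t} (\<lambda>r. k (t - r) *\<^sub>R Q \<epsilon> r)) \<le> \<eta> * integral {0..t} k"
        by simp
    qed (use \<open>d > 0\<close> in simp)
  qed
  show ?thesis
    unfolding tendsto_iff
  proof (intro allI impI)
    fix e :: real assume "e > 0"
    define P where "P = integral {0..t} k + 1"
    have "0 < P"
      using integral_nu_bar_nonneg[of 0 t] by (simp add: P_def)
    define \<eta> where "\<eta> = e / 2 / P"
    have "\<eta> > 0" "\<eta> * P = e / 2"
      using \<open>0 < P\<close> \<open>e > 0\<close> by (simp_all add: \<eta>_def)
    then have "\<eta> * integral {0..t} k < e"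
      using \<open>e > 0\<close> by (simp add: P_def algebra_simps)
    from error_small[OF \<open>\<eta> > 0\<close>] show "\<forall>\<^sub>F \<epsilon> in at_right 0.
        dist ((1 / \<epsilon>) *\<^sub>R integral {0..t} (\<lambda>r. k (t - r) *\<^sub>R (H r - H (r - \<epsilon>)))) (kh t) < e"
      by (rule eventually_mono) (use \<open>\<eta> * integral {0..t} k < e\<close> in \<open>simp add: dist_norm error\<close>)
  qed
qed

lemma conv_H_shift_eq:
  assumes "0 \<le> S" "S \<le> t - \<epsilon>" "0 < \<epsilon>" and H_S: "\<And>x. x \<in> {0..S} \<Longrightarrow> H x = 0"
  shows "integral {0..t} (\<lambda>r. k (t - r) *\<^sub>R H (r - \<epsilon>)) = integral {S..t-\<epsilon>} (\<lambda>r. k (t - \<epsilon> - r) *\<^sub>R H r)"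
proof -
  define G where "G r = k (t - \<epsilon> - r) *\<^sub>R H r" for r
  have G: "G integrable_on {a..b}" for a b
    unfolding G_def by (rule H_conv_integrable_on)
  have "integral {0..t} (\<lambda>r. k (t - r) *\<^sub>R H (r - \<epsilon>)) = integral {0..t} (G \<circ> (+) (- \<epsilon>))"
    by (rule integral_cong) (simp add: G_def algebra_simps)
  also have "\<dots> = integral {0 + - \<epsilon>..t + - \<epsilon>} G"
    by (rule integral_shift_Icc_real)
  also have "\<dots> = integral {-\<epsilon>..0} G + integral {0..S} G + integral {S..t-\<epsilon>} G"
    using assms Henstock_Kurzweil_Integration.integral_combine[OF _ _ G, of "-\<epsilon>" 0 "t - \<epsilon>"]
      Henstock_Kurzweil_Integration.integral_combine[OF _ _ G, of 0 S "t - \<epsilon>"]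
    by (simp add: add.assoc)
  also have "\<dots> = integral {S..t-\<epsilon>} G"
    using integral_eq_0_on[of "{-\<epsilon>..0}" G] integral_eq_0_on[of "{0..S}" G]
    by (simp add: G_def H_nonpos H_S)
  finally show ?thesis
    by (simp add: G_def[abs_def])
qed

lemma conv_H_split:
  assumes "0 \<le> S" "S \<le> t - \<epsilon>" "0 < \<epsilon>" and H_S: "\<And>x. x \<in> {0..S} \<Longrightarrow> H x = 0"
  shows "integral {0..t} (\<lambda>r. k (t - r) *\<^sub>R H r)
    = integral {S..t-\<epsilon>} (\<lambda>r. k (t - r) *\<^sub>R H r) + integral {t-\<epsilon>..t} (\<lambda>r. k (t - r) *\<^sub>R H r)"
proof -
  have "integral {0..S} (\<lambda>r. k (t - r) *\<^sub>R H r) = 0"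
    by (auto intro!: integral_eq_0_on simp: H_S)
  then show ?thesis
    using assms Henstock_Kurzweil_Integration.integral_combine[OF _ _ H_conv_integrable_on, of 0 S t t]
      Henstock_Kurzweil_Integration.integral_combine[OF _ _ H_conv_integrable_on, of S "t - \<epsilon>" t t]
    by simp
qed

lemma norm_conv_H_near_le:
  assumes "0 < \<epsilon>" and L: "\<And>y. y \<in> {t-\<epsilon>..t} \<Longrightarrow> norm (h_ext y) \<le> L"
  shows "norm (integral {t-\<epsilon>..t} (\<lambda>r. k (t - r) *\<^sub>R H r) - integral {0..\<epsilon>} k *\<^sub>R H t)
    \<le> L * \<epsilon> * integral {0..\<epsilon>} k"
proof -
  have "0 \<le> L"
    using L[of t] \<open>0 < \<epsilon>\<close> by (auto intro: order_trans[OF norm_ge_zero])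
  have "integral {t-\<epsilon>..t} (\<lambda>r. k (t - r) *\<^sub>R H r) - integral {0..\<epsilon>} k *\<^sub>R H t
      = integral {t-\<epsilon>..t} (\<lambda>r. k (t - r) *\<^sub>R (H r - H t))"
    using integral_nu_bar_conv_const[of "t - \<epsilon>" t t "H t"]
      integral_diff[OF H_conv_integrable_on integrable_on_scaleR_left[OF nu_bar_reflect_integrable_on]]
    by (simp add: scaleR_diff_right)
  also have "norm \<dots> \<le> (L * \<epsilon>) * integral {t-t..t-(t-\<epsilon>)} k"
  proof (rule norm_integral_nu_bar_conv_le)
    show "continuous_on {t-\<epsilon>..t} (\<lambda>r. H r - H t)"
      by (intro continuous_intros continuous_on_subset[OF continuous_H]) auto
    fix r assume r: "r \<in> {t-\<epsilon>..t}"
    then have "norm (H t - H r) \<le> L * (t - r)"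
      by (intro norm_H_diff_le) (auto intro: L)
    also have "\<dots> \<le> L * \<epsilon>"
      using r \<open>0 \<le> L\<close> by (intro mult_left_mono) auto
    finally show "norm (H r - H t) \<le> L * \<epsilon>"
      by (simp add: norm_minus_commute)
  qed
  finally show ?thesis
    by simp
qed

lemma norm_conv_H_far_le:
  assumes "0 < \<epsilon>" "\<epsilon> < t - S" and M: "\<And>r. r \<in> {S..t-\<epsilon>} \<Longrightarrow> norm (H r) \<le> M"
  shows "norm (integral {S..t-\<epsilon>} (\<lambda>r. k (t - \<epsilon> - r) *\<^sub>R H r - k (t - r) *\<^sub>R H r))
    \<le> (integral {0..\<epsilon>} k - \<epsilon> * k (t - S)) * M"
proof -
  have "S \<in> {S..t-\<epsilon>}"
    using assms by simp
  then have "0 \<le> M"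
    using M norm_ge_zero[of "H S"] by (meson order_trans)
  \<comment> \<open>the kernel difference is nonnegative except at the endpoint \<open>r = t - \<epsilon>\<close>\<close>
  define w where "w r = (if r < t - \<epsilon> then k (t - \<epsilon> - r) - k (t - r) else 0)" for r
  have w_nonneg: "0 \<le> w r" for r
    using nu_bar_antimono[of "t - \<epsilon> - r" "t - r"] \<open>0 < \<epsilon>\<close> by (simp add: w_def)
  have spike: "negligible {t - \<epsilon>}"
    by simp
  have "(\<lambda>r. k (t - \<epsilon> - r) *\<^sub>R H r - k (t - r) *\<^sub>R H r) integrable_on {S..t-\<epsilon>}"
    by (intro integrable_diff H_conv_integrable_on)
  then have wH: "(\<lambda>r. w r *\<^sub>R H r) integrable_on {S..t-\<epsilon>}"
    by (rule integrable_spike_finite[of "{t - \<epsilon>}", rotated 2]) (auto simp: w_def scaleR_diff_left)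
  have "(\<lambda>r. (k (t - \<epsilon> - r) - k (t - r)) * M) integrable_on {S..t-\<epsilon>}"
    by (intro integrable_on_mult_left integrable_diff nu_bar_reflect_integrable_on)
  then have wM: "(\<lambda>r. w r * M) integrable_on {S..t-\<epsilon>}"
    by (rule integrable_spike_finite[of "{t - \<epsilon>}", rotated 2]) (auto simp: w_def)
  have "integral {S..t-\<epsilon>} (\<lambda>r. k (t - \<epsilon> - r) *\<^sub>R H r - k (t - r) *\<^sub>R H r) = integral {S..t-\<epsilon>} (\<lambda>r. w r *\<^sub>R H r)"
    by (rule integral_spike[OF spike]) (auto simp: w_def scaleR_diff_left)
  also have "norm \<dots> \<le> integral {S..t-\<epsilon>} (\<lambda>r. w r * M)"
    using wH wM by (rule integral_norm_bound_integral) (simp add: M w_nonneg mult_left_mono)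
  also have "\<dots> = integral {S..t-\<epsilon>} (\<lambda>r. (k (t - \<epsilon> - r) - k (t - r)) * M)"
    by (rule integral_spike[OF spike]) (auto simp: w_def)
  also have "\<dots> = (integral {S..t-\<epsilon>} (\<lambda>r. k (t - \<epsilon> - r)) - integral {S..t-\<epsilon>} (\<lambda>r. k (t - r))) * M"
    by (simp add: integral_diff nu_bar_reflect_integrable_on)
  also have "\<dots> = (integral {0..t-S-\<epsilon>} k - integral {\<epsilon>..t-S} k) * M"
    using integral_nu_bar_reflect[of S "t - \<epsilon>" "t - \<epsilon>"] integral_nu_bar_reflect[of S "t - \<epsilon>" t]
    by (simp add: algebra_simps)
  also have "\<dots> = (integral {0..\<epsilon>} k - integral {t-S-\<epsilon>..t-S} k) * M"
    using assms Henstock_Kurzweil_Integration.integral_combine[OF _ _ nu_bar_integrable_on, of 0 "t - S - \<epsilon>" "t - S"]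
      Henstock_Kurzweil_Integration.integral_combine[OF _ _ nu_bar_integrable_on, of 0 \<epsilon> "t - S"]
    by simp
  also have "\<dots> \<le> (integral {0..\<epsilon>} k - \<epsilon> * k (t - S)) * M"
  proof -
    have "integral {t-S-\<epsilon>..t-S} (\<lambda>_. k (t - S)) \<le> integral {t-S-\<epsilon>..t-S} k"
      using assms by (intro integral_le nu_bar_integrable_on nu_bar_antimono) auto
    then show ?thesis
      using assms \<open>0 \<le> M\<close> by (intro mult_right_mono) auto
  qed
  finally show ?thesis .
qed

lemma norm_conv_H_difference_ge:
  assumes "0 \<le> S" "0 < \<epsilon>" "\<epsilon> < t - S"
    and H_S: "\<And>x. x \<in> {0..S} \<Longrightarrow> H x = 0"
    and H_max: "\<And>y. y \<in> {0..t} \<Longrightarrow> norm (H y) \<le> norm (H t)"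
    and L: "\<And>y. y \<in> {0..t} \<Longrightarrow> norm (h_ext y) \<le> L"
  shows "\<epsilon> * k (t - S) * norm (H t) - \<epsilon> * L * integral {0..\<epsilon>} k
    \<le> norm (integral {0..t} (\<lambda>r. k (t - r) *\<^sub>R (H r - H (r - \<epsilon>))))"
proof -
  define K where "K = integral {0..\<epsilon>} k"
  define near where "near = integral {t-\<epsilon>..t} (\<lambda>r. k (t - r) *\<^sub>R H r)"
  define far where "far = integral {S..t-\<epsilon>} (\<lambda>r. k (t - \<epsilon> - r) *\<^sub>R H r - k (t - r) *\<^sub>R H r)"
  have "integral {0..t} (\<lambda>r. k (t - r) *\<^sub>R (H r - H (r - \<epsilon>)))
      = integral {0..t} (\<lambda>r. k (t - r) *\<^sub>R H r) - integral {0..t} (\<lambda>r. k (t - r) *\<^sub>R H (r - \<epsilon>))"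
    by (simp add: scaleR_diff_right integral_diff H_conv_integrable_on H_shift_conv_integrable_on)
  also have "\<dots> = near - far"
    using assms conv_H_split[of S t \<epsilon>] conv_H_shift_eq[of S t \<epsilon>]
    by (simp add: near_def far_def integral_diff H_conv_integrable_on)
  finally have E: "integral {0..t} (\<lambda>r. k (t - r) *\<^sub>R (H r - H (r - \<epsilon>))) = K *\<^sub>R H t + (near - K *\<^sub>R H t) - far"
    by simp
  have "0 \<le> K"
    unfolding K_def by (rule integral_nu_bar_nonneg)
  have "norm (near - K *\<^sub>R H t) \<le> L * \<epsilon> * K"
    unfolding near_def K_def using assms by (intro norm_conv_H_near_le L) auto
  moreover have "norm far \<le> (K - \<epsilon> * k (t - S)) * norm (H t)"
    unfolding far_def K_def using assms by (intro norm_conv_H_far_le H_max) auto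
  moreover have "norm (K *\<^sub>R H t) \<le> norm (K *\<^sub>R H t + (near - K *\<^sub>R H t) - far) + norm (near - K *\<^sub>R H t) + norm far"
    by (smt (verit) norm_triangle_ineq4 norm_triangle_ineq add_diff_cancel_right' diff_add_cancel)
  ultimately show ?thesis
    using \<open>0 \<le> K\<close> unfolding E K_def[symmetric] by (simp add: algebra_simps)
qed

lemma nu_bar_mult_norm_H_le_norm_kh:
  assumes "0 \<le> S" "S < t"
    and H_S: "\<And>x. x \<in> {0..S} \<Longrightarrow> H x = 0"
    and H_max: "\<And>y. y \<in> {0..t} \<Longrightarrow> norm (H y) \<le> norm (H t)"
  shows "k (t - S) * norm (H t) \<le> norm (kh t)"
proof -
  have "compact (h_ext ` {0..t})"
    by (rule compact_continuous_image[OF continuous_on_subset[OF continuous_h_ext]]) auto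
  then obtain L where L: "\<And>y. y \<in> {0..t} \<Longrightarrow> norm (h_ext y) \<le> L"
    using compact_imp_bounded bounded_iff by (metis imageI)
  define E where "E \<epsilon> = integral {0..t} (\<lambda>r. k (t - r) *\<^sub>R (H r - H (r - \<epsilon>)))" for \<epsilon>
  have "((\<lambda>\<epsilon>. norm ((1 / \<epsilon>) *\<^sub>R E \<epsilon>)) \<longlongrightarrow> norm (kh t)) (at_right 0)"
    unfolding E_def by (intro tendsto_norm conv_H_difference_quotient_tendsto)
  moreover have "((\<lambda>\<epsilon>. k (t - S) * norm (H t) - L * integral {0..\<epsilon>} k) \<longlongrightarrow> k (t - S) * norm (H t) - L * 0)
      (at_right 0)"
    by (intro tendsto_intros integral_nu_bar_tendsto_0)
  moreover have "\<forall>\<^sub>F \<epsilon> in at_right 0. k (t - S) * norm (H t) - L * integral {0..\<epsilon>} k \<le> norm ((1 / \<epsilon>) *\<^sub>R E \<epsilon>)"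
  proof (rule eventually_at_rightI[of 0 "t - S"])
    fix \<epsilon> :: real assume \<epsilon>: "\<epsilon> \<in> {0<..<t - S}"
    then have "0 < \<epsilon>" "\<epsilon> < t - S"
      by auto
    then have "\<epsilon> * (k (t - S) * norm (H t) - L * integral {0..\<epsilon>} k) \<le> norm (E \<epsilon>)"
      unfolding E_def using norm_conv_H_difference_ge[OF \<open>0 \<le> S\<close> _ _ H_S H_max L, of \<epsilon>]
      by (simp add: algebra_simps)
    then show "k (t - S) * norm (H t) - L * integral {0..\<epsilon>} k \<le> norm ((1 / \<epsilon>) *\<^sub>R E \<epsilon>)"
      using \<epsilon> by (simp add: field_simps)
  qed (use assms in simp)
  ultimately show ?thesis
    using tendsto_le[OF trivial_limit_at_right_real] by fastforce
qed

lemma H_eq_0_extend: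
  assumes "0 < \<delta>" "onorm F < k \<delta>" "0 \<le> S"
    and H_S: "\<And>x. x \<in> {0..S} \<Longrightarrow> H x = 0"
    and x: "x \<in> {0..S + \<delta>}"
  shows "H x = 0"
proof -
  have "\<exists>t\<in>{0..S + \<delta>}. \<forall>y\<in>{0..S + \<delta>}. norm (H y) \<le> norm (H t)"
    using assms by (intro continuous_attains_sup)
      (auto intro!: continuous_intros continuous_on_subset[OF continuous_H])
  then obtain t where t: "t \<in> {0..S + \<delta>}" and t_max: "\<And>y. y \<in> {0..S + \<delta>} \<Longrightarrow> norm (H y) \<le> norm (H t)"
    by blast
  have "H t = 0"
  proof (rule ccontr)
    assume "H t \<noteq> 0"
    then have "S < t"
      using H_S t by force
    have "k (t - S) * norm (H t) \<le> norm (kh t)"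
      using \<open>0 \<le> S\<close> \<open>S < t\<close> H_S t_max t by (intro nu_bar_mult_norm_H_le_norm_kh) auto
    also have "\<dots> = norm (F (H t))"
      using kh_eq_F_H \<open>0 \<le> S\<close> \<open>S < t\<close> by simp
    also have "\<dots> \<le> onorm F * norm (H t)"
      by (rule onorm[OF bounded_linear_F])
    also have "\<dots> < k \<delta> * norm (H t)"
      using assms(2) \<open>H t \<noteq> 0\<close> by simp
    also have "\<dots> \<le> k (t - S) * norm (H t)"
      using \<open>S < t\<close> t by (intro mult_right_mono nu_bar_antimono) auto
    finally show False
      by simp
  qed
  then show ?thesis
    using t_max[OF x] by simp
qed

lemma h_eq_0:
  assumes "0 \<le> t"
  shows "h t = 0"
proof -
  obtain \<delta> where "0 < \<delta>" "onorm F < k \<delta>"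
    using nu_bar_unbounded by blast
  have H_0_upto: "H x = 0" if "x \<in> {0..real n * \<delta>}" for n x
    using that
  proof (induction n arbitrary: x)
    case (Suc n)
    then show ?case
      using H_eq_0_extend[OF \<open>0 < \<delta>\<close> \<open>onorm F < k \<delta>\<close>, of "real n * \<delta>"] \<open>0 < \<delta>\<close>
      by (simp add: algebra_simps)
  qed (simp add: H_nonpos)
  have H_0: "H x = 0" if "0 \<le> x" for x
  proof -
    obtain n where "x < real n * \<delta>"
      using reals_Archimedean3[OF \<open>0 < \<delta>\<close>] by blast
    with that show ?thesis
      using H_0_upto[of x n] by simp
  qed
  show ?thesis
  proof (cases "t = 0")
    case False
    with assms have "0 < t"
      by simp
    have "(H has_vector_derivative h_ext t) (at t within {0..t+1})"
      unfolding H_def[abs_def] using \<open>0 < t\<close>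
      by (intro integral_has_vector_derivative continuous_on_subset[OF continuous_h_ext]) auto
    then have "(H has_vector_derivative h_ext t) (at t)"
      using at_within_Icc_at[of 0 t "t + 1"] \<open>0 < t\<close> by simp
    then have "((\<lambda>_. 0) has_vector_derivative h_ext t) (at t)"
      by (rule has_vector_derivative_transform_within_open[of _ _ _ "{0<..}"]) (use \<open>0 < t\<close> H_0 in auto)
    then have "h_ext t = 0"
      using has_vector_derivative_const vector_derivative_unique_at by blast
    then show ?thesis
      using \<open>0 < t\<close> by (simp add: h_ext_eq)
  qed (simp add: h_0)
qed

end

lemma levy_tail_if_standing_assumption: "standing_assumption \<Phi> \<nu> u \<Longrightarrow> levy_tail \<nu>"
  unfolding standing_assumption_def levy_tail_def by auto

lemma (in levy_tail) caputo_homogeneous_diff: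
  assumes F: "bounded_linear F"
    and f: "caputo_solution \<nu> F \<xi> f0 f" and g: "caputo_solution \<nu> F \<xi> f0 g"
  shows "caputo_homogeneous \<nu> F (\<lambda>s. f s - g s)"
proof -
  have cont: "continuous_on {0..} f" "continuous_on {0..} g" and "f 0 = f0" "g 0 = f0"
    using f g by (auto simp: caputo_solution_def)
  have conv_diff: "integral {0..\<tau>} (\<lambda>s. k (\<tau> - s) *\<^sub>R (f s - g s))
      = integral {0..\<tau>} (\<lambda>s. k (\<tau> - s) *\<^sub>R (f s - f 0)) - integral {0..\<tau>} (\<lambda>s. k (\<tau> - s) *\<^sub>R (g s - g 0))" for \<tau>
  proof -
    have "integral {0..\<tau>} (\<lambda>s. k (\<tau> - s) *\<^sub>R (f s - f 0)) - integral {0..\<tau>} (\<lambda>s. k (\<tau> - s) *\<^sub>R (g s - g 0))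
        = integral {0..\<tau>} (\<lambda>s. k (\<tau> - s) *\<^sub>R (f s - f 0) - k (\<tau> - s) *\<^sub>R (g s - g 0))"
      by (intro integral_diff[symmetric] nu_bar_conv_integrable_on continuous_intros
          continuous_on_subset[OF cont(1)] continuous_on_subset[OF cont(2)]) auto
    also have "\<dots> = integral {0..\<tau>} (\<lambda>s. k (\<tau> - s) *\<^sub>R (f s - g s))"
      using \<open>f 0 = f0\<close> \<open>g 0 = f0\<close> by (simp add: algebra_simps)
    finally show ?thesis
      by simp
  qed
  show ?thesis
  proof (intro caputo_homogeneous.intro caputo_homogeneous_axioms.intro)
    show "levy_tail \<nu>"
      by (rule levy_tail_axioms)
    show "bounded_linear F"
      by (rule F)
    show "continuous_on {0..} (\<lambda>s. f s - g s)"
      using cont by (intro continuous_intros)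
    show "f 0 - g 0 = 0"
      using \<open>f 0 = f0\<close> \<open>g 0 = f0\<close> by simp
    fix t :: real assume "t > 0"
    with f g have "((\<lambda>\<tau>. integral {0..\<tau>} (\<lambda>s. k (\<tau> - s) *\<^sub>R (f s - g s)))
        has_vector_derivative (\<xi> + F (f t)) - (\<xi> + F (g t))) (at t)"
      unfolding conv_diff caputo_solution_def by (intro has_vector_derivative_diff) auto
    then show "((\<lambda>\<tau>. integral {0..\<tau>} (\<lambda>s. k (\<tau> - s) *\<^sub>R (f s - g s))) has_vector_derivative F (f t - g t)) (at t)"
      by (simp add: linear_diff[OF bounded_linear.linear[OF F]])
  qed
qed

theorem mainTheorem7:
  fixes \<Phi> :: "real \<Rightarrow> real" and \<nu> :: "real measure" and u :: "real \<Rightarrow> real"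
    and F :: "'a::banach \<Rightarrow> 'a" and \<xi> f0 :: 'a and f g :: "real \<Rightarrow> 'a"
  assumes "standing_assumption \<Phi> \<nu> u"
    and "absolutely_continuous lborel \<nu>"
    and "bounded_linear F"
    and "caputo_solution \<nu> F \<xi> f0 f"
    and "caputo_solution \<nu> F \<xi> f0 g"
  shows "\<forall>t\<ge>0. f t = g t"
proof -
  interpret levy_tail \<nu>
    using assms(1) by (rule levy_tail_if_standing_assumption)
  interpret caputo_homogeneous \<nu> F "\<lambda>s. f s - g s"
    using assms(3-5) by (rule caputo_homogeneous_diff)
  show ?thesis
    using h_eq_0 by simp
qed

end
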